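(* Let $e$ be a directed edge of $\Gamma$ labeled $y$, not on $T$, from $g$ to $g'=gy$. Write $\gamma=\mathrm{nf}(g)=x^{i_n}y^{\epsilon_n}\cdots x^{i_1}y^{\epsilon_1}x^{i_0}$ and $\gamma'=\mathrm{nf}(g')=x^{j_{n'}}y^{\varepsilon_{n'}}\cdots x^{j_1}y^{\varepsilon_1}x^{j_0}$, let $s_k=i_k+\cdots+i_0$ ($0\le k\le n$), $s'_k=j_k+\cdots+j_0$ ($0\le k\le n'$), let $m=\min\{k\mid s_k\le0\}$ (or $m=n$ if no such $k$) and $m'=\min\{k\mid s'_k\le1\}$ (or $m'=n'$ if no such $k$). Then $m=m'$, and the sequence of $y$-rule sizes $(s_0,\dots,s_{m-1})$ used in rewriting $\gamma y$ to $\gamma'$ coincides (in order) with the sequence of $y^{-1}$-rule sizes $(s'_0-1,\dots,s'_{m'-1}-1)$ used in rewriting $\gamma' y^{-1}$ to $\gamma$; that is, $s'_k-1=s_k$ for $0\le k\le m-1$.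
   Context: $F$ is Thompson's group with generators $x,y$, $A=\{x^{\pm1},y^{\pm1}\}$, $\Gamma$ its Cayley graph over $A$. Guba–Sapir's convergent rewriting system $\Sigma$ consists of free reductions $aa^{-1}\to\emptyset$ ($a\in A$), the $y$-rules of size $i$: $y^\epsilon x^iy\to x^iyx^{-i-1}y^\epsilon x^{i+1}$, and the $y^{-1}$-rules of size $i$: $y^\epsilon x^{i+1}y^{-1}\to x^{i+1}y^{-1}x^{-i}y^\epsilon x^i$ ($\epsilon\in\{1,-1\}$, $i\ge1$). $\mathcal N$ is the set of $\Sigma$-irreducible words (unique normal forms for $F$), and $\mathrm{nf}(w)$ denotes the word of $\mathcal N$ representing the same element as $w$. $T$ is the subtree of $\Gamma$ whose non-backtracking paths from the identity are labeled exactly by the words of $\mathcal N$. *)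

theory Defs
  imports Main
begin

datatype gen = X | Y

text \<open>A letter is a generator with a sign: (g, True) is g, (g, False) is g^-1.\<close>
type_synonym letter = "gen \<times> bool"
type_synonym word = "letter list"

definition inv_letter :: "letter \<Rightarrow> letter" where
  "inv_letter a = (fst a, \<not> snd a)"

definition xpow :: "int \<Rightarrow> word" where
  "xpow k = (if k \<ge> 0 then replicate (nat k) (X, True) else replicate (nat (- k)) (X, False))"

inductive_set sigma_rules :: "(word \<times> word) set" where
  free_red: "([a, inv_letter a], []) \<in> sigma_rules"
| y_rule: "i \<ge> 1 \<Longrightarrow>
    ([(Y, e)] @ xpow i @ [(Y, True)],
     xpow i @ [(Y, True)] @ xpow (- i - 1) @ [(Y, e)] @ xpow (i + 1)) \<in> sigma_rules"
| yinv_rule: "i \<ge> 1 \<Longrightarrow>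
    ([(Y, e)] @ xpow (i + 1) @ [(Y, False)],
     xpow (i + 1) @ [(Y, False)] @ xpow (- i) @ [(Y, e)] @ xpow i) \<in> sigma_rules"

definition sigma_step :: "(word \<times> word) set" where
  "sigma_step = {(p @ l @ q, p @ r @ q) | p l r q. (l, r) \<in> sigma_rules}"

text \<open>Two words represent the same element of F.  Since Sigma is a (convergent)
  presentation of F, this is the equivalence closure of Sigma-rewriting.\<close>
definition word_eq :: "word \<Rightarrow> word \<Rightarrow> bool" where
  "word_eq u v \<longleftrightarrow> (u, v) \<in> (sigma_step \<union> sigma_step\<inverse>)\<^sup>*"

definition NF_set :: "word set" where
  "NF_set = {w. \<not> (\<exists>v. (w, v) \<in> sigma_step)}"

definition nf :: "word \<Rightarrow> word" where
  "nf w = (THE v. v \<in> NF_set \<and> word_eq w v)"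

text \<open>The directed edge of the Cayley graph from (the element represented by) w, labeled a,
  lies on T iff it is traversed (in either direction) by the non-backtracking path from
  the identity labeled by some word of N.\<close>
definition edge_on_T :: "word \<Rightarrow> letter \<Rightarrow> bool" where
  "edge_on_T w a \<longleftrightarrow>
     (\<exists>u p q. u \<in> NF_set \<and>
        ((u = p @ [a] @ q \<and> word_eq p w) \<or>
         (u = p @ [inv_letter a] @ q \<and> word_eq p (w @ [a]))))"

fun blocks :: "word \<Rightarrow> word list" where
  "blocks [] = [[]]"
| "blocks (a # w) = (let bs = blocks w in
     if fst a = Y then [] # bs else (a # hd bs) # tl bs)"

definition xsum :: "word \<Rightarrow> int" where
  "xsum b = (\<Sum>a\<leftarrow>b. if fst a = X then (if snd a then 1 else -1) else 0)"

definition ylen :: "word \<Rightarrow> nat" where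
  "ylen w = length (filter (\<lambda>a. fst a = Y) w)"

text \<open>i_k: the x-exponent of the k-th block counted from the right (k = 0 is rightmost).\<close>
definition iexp :: "word \<Rightarrow> nat \<Rightarrow> int" where
  "iexp w k = xsum (rev (blocks w) ! k)"

definition psum :: "word \<Rightarrow> nat \<Rightarrow> int" where
  "psum w k = (\<Sum>j\<le>k. iexp w j)"

definition mindex :: "word \<Rightarrow> int \<Rightarrow> nat" where
  "mindex w c = (if \<exists>k\<le>ylen w. psum w k \<le> c
                 then (LEAST k. k \<le> ylen w \<and> psum w k \<le> c) else ylen w)"

end

theory Submission
  imports Defs
begin

(* Normal forms are coded by their exponents, and right multiplication by x^(+-1) and y^(+-1)
   is computed explicitly on codes.  Multiplying x^(i_n) y^(e_n) ... x^(i_1) y^(e_1) x^(i_0)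
   by y applies the y-rule of size s_k = i_k + ... + i_0 for k = 0, 1, ... as long as s_k is
   positive; each application moves the new letter y one block to the left and leaves behind
   a block whose partial sum is s_k + 1.  At the first k = m with s_m <= 0 the letter stops,
   and the partial sum of the result there is at most 1, which gives both claims.
   The explicit action respects every rule of Sigma, and the word of the code of an
   irreducible word is that word itself; hence irreducible forms are unique and nf w is the
   word of the code of w. *)

section \<open>Codes of normal forms and right multiplication\<close>

(* (a, [(e_1, i_1), ..., (e_n, i_n)]) codes x^(i_n) y^(e_n) ... x^(i_1) y^(e_1) x^a: the
   blocks are listed from the right, and a is the exponent i_0 of the theorem. *)
type_synonym nfcode = "int \<times> (bool \<times> int) list"

fun word_of :: "nfcode \<Rightarrow> word" where
  "word_of (a, []) = xpow a"
| "word_of (a, (e, i) # L) = word_of (i, L) @ [(Y, e)] @ xpow a"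

definition bsgn :: "bool \<Rightarrow> int" where
  "bsgn b = (if b then 1 else -1)"

(* The y-rule rewrites y^e x^a y for a >= 1, the y^-1-rule rewrites y^e x^a y^-1 for a >= 2. *)
definition rule_threshold :: "bool \<Rightarrow> int" where
  "rule_threshold c = (if c then 1 else 2)"

fun irred_blocks :: "(bool \<times> int) list \<Rightarrow> bool" where
  "irred_blocks ((e, i) # (e', i') # L) \<longleftrightarrow>
     i < rule_threshold e \<and> (e' \<noteq> e \<longrightarrow> i \<noteq> 0) \<and> irred_blocks ((e', i') # L)"
| "irred_blocks _ = True"

definition irred_code :: "nfcode \<Rightarrow> bool" where
  "irred_code s \<longleftrightarrow> irred_blocks (snd s)"

fun xmul :: "int \<Rightarrow> nfcode \<Rightarrow> nfcode" where
  "xmul k (a, L) = (a + k, L)"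

(* In the first case the word ends in y^e x^a y^c, and the y^c-rule moves y^c to the left
   of y^e; the recursion continues on the block to the left, whose exponent has become the
   partial sum i + a. *)
fun ymul :: "bool \<Rightarrow> nfcode \<Rightarrow> nfcode" where
  "ymul c (a, []) = (0, [(c, a)])"
| "ymul c (a, (e, i) # L) =
     (if rule_threshold c \<le> a then
        (let r = ymul c (i + a, L) in (a + bsgn c, (e, fst r - a - bsgn c) # snd r))
      else if e \<noteq> c \<and> a = 0 then (i, L)
      else (0, (c, a) # (e, i) # L))"

lemma irred_blocks_Cons: "irred_blocks (p # L) \<Longrightarrow> irred_blocks L"
  by (cases p; cases L) auto

lemma irred_blocks_ymul: "irred_blocks L \<Longrightarrow> irred_blocks (snd (ymul c (a, L)))"
proof (induction L arbitrary: a)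
  case Nil
  show ?case by simp
next
  case (Cons p L)
  obtain e i where p: "p = (e, i)" by force
  have IH: "irred_blocks (snd (ymul c (i + a, L)))"
    using Cons irred_blocks_Cons p by blast
  show ?case
  proof (cases L)
    case Nil
    then show ?thesis using p by (auto simp: Let_def rule_threshold_def bsgn_def)
  next
    case (Cons q L')
    obtain e' i' where q: "q = (e', i')" by force
    show ?thesis
    proof (cases "rule_threshold c \<le> a")
      case True
      then show ?thesis
        using Cons.prems IH p Cons q
        by (cases L') (auto simp: Let_def rule_threshold_def bsgn_def)
    next
      case False
      then show ?thesis
        using Cons.prems IH p Cons q
        by (auto simp: Let_def rule_threshold_def bsgn_def)
    qed
  qed
qed

lemma ymul_inverse: "irred_blocks L \<Longrightarrow> ymul (\<not> c) (ymul c (a, L)) = (a, L)"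
proof (induction L arbitrary: a)
  case Nil
  then show ?case by (simp add: rule_threshold_def)
next
  case (Cons p L)
  obtain e i where p: "p = (e, i)" by force
  have IH: "ymul (\<not> c) (ymul c (i + a, L)) = (i + a, L)"
    using Cons irred_blocks_Cons p by blast
  show ?case
    using Cons.prems IH p
    by (cases L) (auto simp: Let_def rule_threshold_def bsgn_def split: prod.splits)
qed

lemma irred_code_ymul [simp]: "irred_code s \<Longrightarrow> irred_code (ymul c s)"
  by (cases s) (simp add: irred_code_def irred_blocks_ymul)

lemma irred_code_xmul [simp]: "irred_code (xmul k s) \<longleftrightarrow> irred_code s"
  by (cases s) (simp add: irred_code_def)

lemma ymul_ymul_inverse [simp]: "irred_code s \<Longrightarrow> c' \<noteq> c \<Longrightarrow> ymul c' (ymul c s) = s"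
  using ymul_inverse[of "snd s" c "fst s"] by (cases s) (auto simp: irred_code_def)

lemma xmul_xmul [simp]: "xmul k (xmul l s) = xmul (l + k) s"
  by (cases s) (simp add: add.assoc)

lemma xmul_0 [simp]: "xmul 0 s = s"
  by (cases s) simp

section \<open>The action respects the rules of Sigma\<close>

lemma ymul_y_rule_True:
  assumes "1 \<le> i" "irred_blocks L"
  shows "ymul True (xmul i (ymul True (a, L))) =
         xmul (i + 1) (ymul True (xmul (- i - 1) (ymul True (xmul i (a, L)))))"
  using assms(2)
proof (induction L arbitrary: a)
  case Nil
  then show ?case using assms(1) by (simp add: rule_threshold_def bsgn_def)
next
  case (Cons p L)
  obtain e c where p: "p = (e, c)" by force
  show ?case
  proof (cases "1 \<le> a")
    case True
    have IH: "ymul True (xmul i (ymul True (c + a, L))) =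
        xmul (i + 1) (ymul True (xmul (- i - 1) (ymul True (xmul i (c + a, L)))))"
      using Cons irred_blocks_Cons p by blast
    obtain j1 M1 where r1: "ymul True (c + a, L) = (j1, M1)" by force
    obtain j2 M2 where r2: "ymul True (j1 + i, M1) = (j2, M2)" by force
    obtain j3 M3 where r3: "ymul True (c + (a + i), L) = (j3, M3)" by force
    obtain j4 M4 where r4: "ymul True (j3 - i - 1, M3) = (j4, M4)" by force
    have "j2 = j4 + i + 1 \<and> M2 = M4"
      using IH r1 r2 r3 r4 by (simp add: algebra_simps)
    then show ?thesis
      using True assms(1) r1 r2 r3 r4 p by (simp add: rule_threshold_def bsgn_def algebra_simps)
  next
    case False
    then show ?thesis using assms(1) Cons.prems p
      by (cases L) (auto simp: rule_threshold_def bsgn_def Let_def algebra_simps split: prod.splits)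
  qed
qed

lemma ymul_y_rule:
  assumes "1 \<le> i" "irred_code s"
  shows "ymul True (xmul i (ymul e s)) =
         xmul (i + 1) (ymul e (xmul (- i - 1) (ymul True (xmul i s))))"
proof (cases e)
  case True
  then show ?thesis
    using assms ymul_y_rule_True by (cases s) (simp add: irred_code_def del: xmul_xmul)
next
  case False
  define t where "t = ymul False s"
  have t: "irred_code t" "s = ymul True t"
    using assms(2) by (simp_all add: t_def)
  have "ymul True (xmul i (ymul True t)) =
        xmul (i + 1) (ymul True (xmul (- i - 1) (ymul True (xmul i t))))"
    using assms(1) t(1) ymul_y_rule_True by (cases t) (simp add: irred_code_def del: xmul_xmul)
  then have "ymul False (xmul (- i - 1) (ymul True (xmul i s))) =
             xmul (- i - 1) (ymul True (xmul i t))"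
    using t by simp
  then show ?thesis
    using False t by simp
qed

lemma ymul_yinv_rule:
  assumes "1 \<le> i" "irred_code h"
  shows "ymul False (xmul (i + 1) (ymul e h)) =
         xmul i (ymul e (xmul (- i) (ymul False (xmul (i + 1) h))))"
proof -
  define g where "g = xmul (- i) (ymul False (xmul (i + 1) h))"
  have g: "irred_code g" "ymul True (xmul i g) = xmul (i + 1) h"
    using assms(2) by (simp_all add: g_def)
  then have "ymul True (xmul i (ymul e g)) = xmul (i + 1) (ymul e h)"
    using ymul_y_rule[OF assms(1) g(1), of e] by simp
  then have "ymul False (xmul (i + 1) (ymul e h)) = xmul i (ymul e g)"
    using g(1) by (metis irred_code_xmul irred_code_ymul ymul_ymul_inverse)
  then show ?thesis by (simp add: g_def)
qed

fun gmul :: "nfcode \<Rightarrow> letter \<Rightarrow> nfcode" where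
  "gmul s (X, b) = xmul (bsgn b) s"
| "gmul s (Y, b) = ymul b s"

definition code_of :: "word \<Rightarrow> nfcode" where
  "code_of w = foldl gmul (0, []) w"

lemma irred_code_gmul [simp]: "irred_code s \<Longrightarrow> irred_code (gmul s a)"
  by (cases "(s, a)" rule: gmul.cases) auto

lemma irred_code_foldl_gmul [simp]: "irred_code s \<Longrightarrow> irred_code (foldl gmul s w)"
  by (induction w arbitrary: s) auto

lemma irred_code_code_of [simp]: "irred_code (code_of w)"
  using irred_code_foldl_gmul[of "(0, [])" w] by (simp add: code_of_def irred_code_def)

lemma xpow_replicate: "xpow k = replicate (nat \<bar>k\<bar>) (X, 0 \<le> k)"
  by (simp add: xpow_def)

lemma foldl_gmul_xpow [simp]: "foldl gmul s (xpow k) = xmul k s"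
proof -
  have "foldl gmul s (replicate n (X, b)) = xmul (int n * bsgn b) s" for n b
    by (induction n arbitrary: s) (simp_all add: algebra_simps)
  then show ?thesis
    by (simp add: xpow_replicate bsgn_def)
qed

lemma foldl_gmul_rule:
  assumes "(l, r) \<in> sigma_rules" "irred_code s"
  shows "foldl gmul s l = foldl gmul s r"
  using assms
proof induction
  case (free_red a)
  then show ?case
    by (cases "(s, a)" rule: gmul.cases) (simp_all add: inv_letter_def bsgn_def)
next
  case (y_rule i e)
  then show ?case using ymul_y_rule[of i s e] by simp
next
  case (yinv_rule i e)
  then show ?case using ymul_yinv_rule[of i s e] by simp
qed

lemma foldl_gmul_step:
  assumes "(u, v) \<in> sigma_step" "irred_code s"
  shows "foldl gmul s u = foldl gmul s v"
proof -
  obtain p l r q where "u = p @ l @ q" "v = p @ r @ q" "(l, r) \<in> sigma_rules"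
    using assms(1) unfolding sigma_step_def by blast
  then show ?thesis
    using foldl_gmul_rule[of l r "foldl gmul s p"] assms(2) by simp
qed

lemma code_of_word_eq:
  assumes "word_eq u v"
  shows "code_of u = code_of v"
  using assms unfolding word_eq_def
proof (induction rule: rtrancl_induct)
  case (step v w)
  then show ?case
    using foldl_gmul_step[of v w "(0, [])"] foldl_gmul_step[of w v "(0, [])"]
    by (auto simp: code_of_def irred_code_def)
qed simp

section \<open>Every word is equivalent to the word of its code\<close>

lemma word_eq_refl [simp]: "word_eq u u"
  by (simp add: word_eq_def)

lemma word_eq_trans [trans]: "word_eq u v \<Longrightarrow> word_eq v w \<Longrightarrow> word_eq u w"
  unfolding word_eq_def by simp

lemma sigma_step_append: "(u, v) \<in> sigma_step \<Longrightarrow> (p @ u @ q, p @ v @ q) \<in> sigma_step"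
  unfolding sigma_step_def by auto (metis append.assoc)

lemma word_eq_append:
  assumes "word_eq u v"
  shows "word_eq (p @ u @ q) (p @ v @ q)"
  using assms unfolding word_eq_def
proof (induction rule: rtrancl_induct)
  case (step v w)
  then have "(p @ v @ q, p @ w @ q) \<in> sigma_step \<union> sigma_step\<inverse>"
    using sigma_step_append by auto
  with step.IH show ?case
    by (rule rtrancl_into_rtrancl)
qed simp

lemma word_eq_append_right: "word_eq u v \<Longrightarrow> word_eq (u @ q) (v @ q)"
  using word_eq_append[of u v "[]" q] by simp

lemma word_eq_rule: "(l, r) \<in> sigma_rules \<Longrightarrow> word_eq (p @ l @ q) (p @ r @ q)"
  unfolding word_eq_def sigma_step_def by blast

lemma sigma_rules_free_red_pair: "([(g, b), (g, \<not> b)], []) \<in> sigma_rules"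
  using sigma_rules.free_red[of "(g, b)"] by (simp add: inv_letter_def)

lemma sigma_rules_y_signed:
  assumes "rule_threshold c \<le> a"
  shows "([(Y, e)] @ xpow a @ [(Y, c)],
          xpow a @ [(Y, c)] @ xpow (- a - bsgn c) @ [(Y, e)] @ xpow (a + bsgn c)) \<in> sigma_rules"
proof (cases c)
  case True
  then show ?thesis
    using assms sigma_rules.y_rule[of a e] by (simp add: rule_threshold_def bsgn_def)
next
  case False
  then show ?thesis
    using assms sigma_rules.yinv_rule[of "a - 1" e] by (simp add: rule_threshold_def bsgn_def)
qed

lemma xpow_snoc:
  "xpow a @ [(X, b)] = xpow (a + bsgn b) \<or> xpow a = xpow (a + bsgn b) @ [(X, \<not> b)]"
proof -
  have up: "xpow (k + 1) = xpow k @ [(X, True)]" if "0 \<le> k" for k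
    using that by (simp add: xpow_def nat_add_distrib replicate_append_same)
  have down: "xpow (k - 1) = xpow k @ [(X, False)]" if "k \<le> 0" for k
  proof -
    have "nat (1 - k) = Suc (nat (- k))" using that by simp
    then show ?thesis using that by (simp add: xpow_def replicate_append_same)
  qed
  show ?thesis
  proof (cases b)
    case True
    then show ?thesis
      using up[of a] down[of "a + 1"] by (cases "0 \<le> a") (simp_all add: bsgn_def)
  next
    case False
    then show ?thesis
      using down[of a] up[of "a - 1"] by (cases "a \<le> 0") (simp_all add: bsgn_def)
  qed
qed

lemma xpow_bsgn: "xpow (bsgn b) = [(X, b)]"
  by (simp add: xpow_def bsgn_def)

lemma word_eq_xpow_snoc: "word_eq (xpow a @ [(X, b)]) (xpow (a + bsgn b))"
  using xpow_snoc[of a b]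
    word_eq_rule[OF sigma_rules_free_red_pair, of "xpow (a + bsgn b)" X "\<not> b" "[]"]
  by auto

lemma word_eq_xpow_append: "word_eq (xpow a @ xpow k) (xpow (a + k))"
proof -
  have rep: "word_eq (xpow a @ replicate n (X, b)) (xpow (a + int n * bsgn b))" for n b
  proof (induction n)
    case (Suc n)
    have "word_eq ((xpow a @ replicate n (X, b)) @ [(X, b)])
                  (xpow (a + int n * bsgn b) @ [(X, b)])"
      using Suc.IH by (rule word_eq_append_right)
    also have "word_eq \<dots> (xpow (a + int (Suc n) * bsgn b))"
      using word_eq_xpow_snoc[of "a + int n * bsgn b" b] by (simp add: algebra_simps)
    finally show ?case
      by (simp flip: replicate_append_same)
  qed simp
  have "xpow k = replicate (nat \<bar>k\<bar>) (X, 0 \<le> k)" "int (nat \<bar>k\<bar>) * bsgn (0 \<le> k) = k"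
    by (simp_all add: xpow_replicate bsgn_def)
  then show ?thesis
    using rep[of "nat \<bar>k\<bar>" "0 \<le> k"] by simp
qed

lemma word_of_eq_append_xpow: "word_of (a, L) = word_of (0, L) @ xpow a"
  by (cases L) (auto simp: xpow_def)

lemma word_eq_word_of_xpow: "word_eq (word_of (a, L) @ xpow k) (word_of (a + k, L))"
  using word_eq_append[OF word_eq_xpow_append, of "word_of (0, L)" a k "[]"]
  by (simp add: word_of_eq_append_xpow[of a L] word_of_eq_append_xpow[of "a + k" L])

lemma word_eq_ymul: "word_eq (word_of (a, L) @ [(Y, c)]) (word_of (ymul c (a, L)))"
proof (induction L arbitrary: a)
  case Nil
  then show ?case by (simp add: xpow_def)
next
  case (Cons p L)
  obtain e i where p: "p = (e, i)" by force
  show ?case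
  proof (cases "rule_threshold c \<le> a")
    case True
    obtain b M where r: "ymul c (i + a, L) = (b, M)" by force
    have "word_eq (word_of (a, p # L) @ [(Y, c)])
        (word_of (i, L) @
          (xpow a @ [(Y, c)] @ xpow (- a - bsgn c) @ [(Y, e)] @ xpow (a + bsgn c)) @ [])"
      using word_eq_rule[OF sigma_rules_y_signed[OF True], of "word_of (i, L)" e "[]"] p by simp
    also have "word_eq \<dots>
        (word_of (i + a, L) @ [(Y, c)] @ xpow (- a - bsgn c) @ [(Y, e)] @ xpow (a + bsgn c))"
      using word_eq_append_right[OF word_eq_word_of_xpow] by simp
    also have "word_eq \<dots>
        (word_of (b, M) @ xpow (- a - bsgn c) @ [(Y, e)] @ xpow (a + bsgn c))"
      using word_eq_append_right[OF Cons.IH] r by (metis append.assoc)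
    also have "word_eq \<dots> (word_of (b - a - bsgn c, M) @ [(Y, e)] @ xpow (a + bsgn c))"
      using word_eq_append_right[OF word_eq_word_of_xpow[of b M "- a - bsgn c"]]
      by (simp add: algebra_simps)
    finally show ?thesis
      using True p r by simp
  next
    case False
    show ?thesis
    proof (cases "e \<noteq> c \<and> a = 0")
      case True
      then show ?thesis
        using p word_eq_rule[OF sigma_rules_free_red_pair, of "word_of (i, L)" Y e "[]"]
        by (simp add: xpow_def rule_threshold_def)
    next
      case False
      then show ?thesis
        using \<open>\<not> rule_threshold c \<le> a\<close> p by (auto simp: xpow_def)
    qed
  qed
qed

lemma word_eq_gmul: "word_eq (word_of s @ [a]) (word_of (gmul s a))"
proof (cases "(s, a)" rule: gmul.cases)
  case (1 s b)
  obtain k L where "s = (k, L)" by force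
  then show ?thesis
    using 1 word_eq_word_of_xpow[of k L "bsgn b"] by (simp add: xpow_bsgn)
next
  case (2 s b)
  then show ?thesis
    using word_eq_ymul[of "fst s" "snd s"] by simp
qed

lemma word_eq_word_of_code: "word_eq w (word_of (code_of w))"
proof (induction w rule: rev_induct)
  case (snoc a w)
  have "word_eq (w @ [a]) (word_of (code_of w) @ [a])"
    using snoc.IH by (rule word_eq_append_right)
  also have "word_eq \<dots> (word_of (gmul (code_of w) a))"
    by (rule word_eq_gmul)
  finally show ?case
    by (simp add: code_of_def)
qed (simp add: code_of_def xpow_def)

section \<open>Irreducible words are words of codes\<close>

lemma blocks_ne: "blocks w \<noteq> []"
  by (induction w) (auto simp: Let_def)

lemma blocks_append_Y: "blocks (u @ (Y, e) # v) = blocks u @ blocks v"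
proof (induction u)
  case (Cons b u)
  then show ?case
    using blocks_ne[of u] by (cases "blocks u") (auto simp: Let_def)
qed simp

lemma fst_set_xpow: "c \<in> set (xpow k) \<Longrightarrow> fst c = X"
  by (auto simp: xpow_def split: if_splits)

lemma blocks_xpow: "blocks (xpow k) = [xpow k]"
proof -
  have "\<forall>c\<in>set v. fst c = X \<Longrightarrow> blocks v = [v]" for v
    by (induction v) (auto simp: Let_def)
  then show ?thesis
    using fst_set_xpow by blast
qed

lemma xsum_xpow: "xsum (xpow k) = k"
  by (auto simp: xsum_def xpow_def sum_list_replicate)

lemma xpow_suffix_unique:
  assumes "u @ [(Y, e)] @ xpow i = u' @ [(Y, e')] @ xpow k"
  shows "i = k"
proof -
  have "xsum (last (blocks (u @ [(Y, e)] @ xpow i))) = i" for u e i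
    by (simp add: blocks_append_Y blocks_xpow xsum_xpow)
  then show ?thesis
    using assms by metis
qed

lemma not_NF_rule: "(l, r) \<in> sigma_rules \<Longrightarrow> p @ l @ q \<notin> NF_set"
  unfolding NF_set_def sigma_step_def by blast

lemma NF_Nil: "[] \<in> NF_set"
  unfolding NF_set_def sigma_step_def by (auto elim: sigma_rules.cases)

definition ends_in_lhs :: "word \<Rightarrow> bool" where
  "ends_in_lhs u \<longleftrightarrow> (\<exists>p l r. u = p @ l \<and> (l, r) \<in> sigma_rules)"

lemma NF_snoc: "w @ [a] \<in> NF_set \<longleftrightarrow> w \<in> NF_set \<and> \<not> ends_in_lhs (w @ [a])"
proof
  assume NF: "w @ [a] \<in> NF_set"
  have "w \<in> NF_set"
  proof (rule ccontr)
    assume "w \<notin> NF_set"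
    then obtain p l r q where "w = p @ l @ q" "(l, r) \<in> sigma_rules"
      unfolding NF_set_def sigma_step_def by blast
    then show False
      using NF not_NF_rule[of l r p "q @ [a]"] by simp
  qed
  moreover have "\<not> ends_in_lhs (w @ [a])"
    using NF not_NF_rule[of _ _ _ "[]"] unfolding ends_in_lhs_def by fastforce
  ultimately show "w \<in> NF_set \<and> \<not> ends_in_lhs (w @ [a])" ..
next
  assume NF: "w \<in> NF_set \<and> \<not> ends_in_lhs (w @ [a])"
  show "w @ [a] \<in> NF_set"
  proof (rule ccontr)
    assume "w @ [a] \<notin> NF_set"
    then obtain p l r q where lhs: "w @ [a] = p @ l @ q" "(l, r) \<in> sigma_rules"
      unfolding NF_set_def sigma_step_def by blast
    show False
    proof (cases q rule: rev_cases)
      case Nil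
      then show ?thesis using lhs NF unfolding ends_in_lhs_def by auto
    next
      case (snoc q' b)
      then show ?thesis using lhs NF not_NF_rule[OF lhs(2)] by auto
    qed
  qed
qed

lemma ends_in_lhs_cases:
  assumes "ends_in_lhs (w @ [a])"
  shows "(\<exists>p. w = p @ [inv_letter a]) \<or>
         (\<exists>p e k c. a = (Y, c) \<and> w = p @ [(Y, e)] @ xpow k \<and> rule_threshold c \<le> k)"
proof -
  obtain p l r where lhs: "w @ [a] = p @ l" "(l, r) \<in> sigma_rules"
    using assms unfolding ends_in_lhs_def by blast
  from lhs(2) show ?thesis
  proof cases
    case (free_red b)
    then show ?thesis
      using lhs(1) by (auto simp: inv_letter_def)
  next
    case (y_rule i e)
    then have "w = p @ [(Y, e)] @ xpow i" "a = (Y, True)" "rule_threshold True \<le> i"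
      using lhs(1) by (simp_all add: rule_threshold_def)
    then show ?thesis by blast
  next
    case (yinv_rule i e)
    then have "w = p @ [(Y, e)] @ xpow (i + 1)" "a = (Y, False)" "rule_threshold False \<le> i + 1"
      using lhs(1) by (simp_all add: rule_threshold_def)
    then show ?thesis by blast
  qed
qed

lemma NF_append_xpow:
  assumes "w \<in> NF_set" "w = [] \<or> fst (last w) = Y"
  shows "w @ xpow k \<in> NF_set"
proof -
  have "w @ replicate n (X, b) \<in> NF_set" for n b
  proof (induction n)
    case (Suc n)
    have "\<not> ends_in_lhs ((w @ replicate n (X, b)) @ [(X, b)])"
    proof
      assume "ends_in_lhs ((w @ replicate n (X, b)) @ [(X, b)])"
      from ends_in_lhs_cases[OF this]
      obtain p where "w @ replicate n (X, b) = p @ [(X, \<not> b)]"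
        by (auto simp: inv_letter_def)
      then have "last (w @ replicate n (X, b)) = (X, \<not> b)" "w @ replicate n (X, b) \<noteq> []"
        by simp_all
      then show False
        using assms(2) by (cases n) (auto simp: last_append split: if_splits)
    qed
    then have "(w @ replicate n (X, b)) @ [(X, b)] \<in> NF_set"
      using Suc.IH NF_snoc by blast
    then show ?case
      by (simp flip: replicate_append_same)
  qed (simp add: assms(1))
  then show ?thesis
    by (simp add: xpow_replicate)
qed

lemma Y_notin_xpow: "(Y, c) \<notin> set (xpow k)"
  using fst_set_xpow by fastforce

lemma not_ends_in_lhs_word_of_snoc_Y:
  assumes "irred_blocks ((e, i) # L)"
  shows "\<not> ends_in_lhs (word_of (i, L) @ [(Y, e)])"
proof
  assume "ends_in_lhs (word_of (i, L) @ [(Y, e)])"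
  then consider q where "word_of (i, L) = q @ [(Y, \<not> e)]"
    | q e'' k where "word_of (i, L) = q @ [(Y, e'')] @ xpow k" "rule_threshold e \<le> k"
    by (fastforce simp: inv_letter_def dest: ends_in_lhs_cases)
  note suffix = this
  show False
  proof (cases L)
    case Nil
    have "(Y, c) \<notin> set (word_of (i, L))" for c
      using Nil Y_notin_xpow by simp
    with suffix show False
      by cases auto
  next
    case (Cons q' L')
    then obtain e' i' where L: "L = (e', i') # L'" by force
    then have word: "word_of (i, L) = word_of (i', L') @ [(Y, e')] @ xpow i"
      by simp
    from suffix show False
    proof cases
      case (1 q)
      then have "xpow i = [] \<and> e' = (\<not> e)"
        using word Y_notin_xpow[of "\<not> e" i] by (cases "xpow i" rule: rev_cases) auto
      then have "i = 0 \<and> e' \<noteq> e"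
        using xsum_xpow[of i] by (auto simp: xsum_def)
      then show False
        using assms L by simp
    next
      case (2 q e'' k)
      then have "i = k"
        using word xpow_suffix_unique[of "word_of (i', L')" e' i] by simp
      then show False
        using assms L 2 by simp
    qed
  qed
qed

lemma word_of_NF: "irred_blocks L \<Longrightarrow> word_of (a, L) \<in> NF_set"
proof (induction L arbitrary: a)
  case Nil
  then show ?case
    using NF_append_xpow[OF NF_Nil] by simp
next
  case (Cons p L)
  obtain e i where p: "p = (e, i)" by force
  have "\<not> ends_in_lhs (word_of (i, L) @ [(Y, e)])"
    using Cons.prems p by (simp add: not_ends_in_lhs_word_of_snoc_Y)
  then have "word_of (i, L) @ [(Y, e)] \<in> NF_set"
    using Cons irred_blocks_Cons p NF_snoc by blast
  then show ?case
    using NF_append_xpow[of "word_of (i, L) @ [(Y, e)]" a] p by simp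
qed

lemma word_of_xmul_NF:
  assumes "word_of (k, L) @ [(X, c)] \<in> NF_set"
  shows "word_of (xmul (bsgn c) (k, L)) = word_of (k, L) @ [(X, c)]"
proof -
  have "xpow k \<noteq> xpow (k + bsgn c) @ [(X, \<not> c)]"
  proof
    assume "xpow k = xpow (k + bsgn c) @ [(X, \<not> c)]"
    then have "word_of (k, L) @ [(X, c)] =
        (word_of (0, L) @ xpow (k + bsgn c)) @ [(X, \<not> c), (X, c)] @ []"
      using word_of_eq_append_xpow[of k L] by simp
    then show False
      using assms not_NF_rule[OF sigma_rules_free_red_pair[of X "\<not> c"]] by metis
  qed
  then show ?thesis
    using xpow_snoc[of k c] word_of_eq_append_xpow[of k L]
      word_of_eq_append_xpow[of "k + bsgn c" L]
    by simp
qed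

lemma word_of_ymul_NF:
  assumes "word_of (k, L) @ [(Y, c)] \<in> NF_set"
  shows "word_of (ymul c (k, L)) = word_of (k, L) @ [(Y, c)]"
proof (cases L)
  case Nil
  then show ?thesis by (simp add: xpow_def)
next
  case (Cons p L')
  obtain e i where L: "L = (e, i) # L'" using Cons by force
  have "\<not> rule_threshold c \<le> k"
  proof
    assume "rule_threshold c \<le> k"
    then show False
      using assms L not_NF_rule[OF sigma_rules_y_signed, of c k "word_of (i, L')" e "[]"]
      by simp
  qed
  moreover have "\<not> (e \<noteq> c \<and> k = 0)"
  proof
    assume "e \<noteq> c \<and> k = 0"
    then have "word_of (k, L) @ [(Y, c)] = word_of (i, L') @ [(Y, \<not> c), (Y, c)] @ []"
      using L by (simp add: xpow_def)
    then show False
      using assms not_NF_rule[OF sigma_rules_free_red_pair[of Y "\<not> c"]] by metis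
  qed
  ultimately show ?thesis
    using L by (simp add: xpow_def)
qed

lemma word_of_gmul_NF:
  assumes "word_of s @ [a] \<in> NF_set"
  shows "word_of (gmul s a) = word_of s @ [a]"
proof -
  obtain k L where s: "s = (k, L)" by force
  obtain g c where a: "a = (g, c)" by force
  show ?thesis
    using assms word_of_xmul_NF[of k L c] word_of_ymul_NF[of k L c] s a by (cases g) simp_all
qed

lemma word_of_code_of_NF: "w \<in> NF_set \<Longrightarrow> word_of (code_of w) = w"
proof (induction w rule: rev_induct)
  case (snoc a w)
  then have "word_of (code_of w) = w"
    using NF_snoc by blast
  then show ?case
    using word_of_gmul_NF[of "code_of w" a] snoc.prems by (simp add: code_of_def)
qed (simp add: code_of_def xpow_def)

lemma nf_eq_word_of_code: "nf w = word_of (code_of w)"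
  unfolding nf_def
proof (rule the_equality)
  show "word_of (code_of w) \<in> NF_set \<and> word_eq w (word_of (code_of w))"
    using word_of_NF[of "snd (code_of w)" "fst (code_of w)"] irred_code_code_of[of w]
      word_eq_word_of_code[of w]
    by (simp add: irred_code_def)
next
  fix v
  assume "v \<in> NF_set \<and> word_eq w v"
  then show "v = word_of (code_of w)"
    using word_of_code_of_NF code_of_word_eq by metis
qed

section \<open>Partial sums of exponents\<close>

declare word_of.simps(2) [simp del]

lemma iexp_word_of_0: "iexp (word_of (a, L)) 0 = a"
  by (cases L) (auto simp: iexp_def word_of.simps(2) blocks_append_Y blocks_xpow xsum_xpow)

lemma iexp_word_of_Suc: "iexp (word_of (a, (e, i) # L)) (Suc k) = iexp (word_of (i, L)) k"
  by (simp add: iexp_def word_of.simps(2) blocks_append_Y blocks_xpow)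

lemma psum_word_of_0: "psum (word_of (a, L)) 0 = a"
  by (simp add: psum_def iexp_word_of_0)

lemma psum_word_of_shift: "psum (word_of (a, L)) k = a + psum (word_of (0, L)) k"
proof -
  have "iexp (word_of (a, L)) (Suc j) = iexp (word_of (0, L)) (Suc j)" for j
    by (cases L) (auto simp: iexp_def word_of.simps(2) blocks_append_Y blocks_xpow)
  then show ?thesis
    unfolding psum_def sum.atMost_shift by (simp add: iexp_word_of_0)
qed

lemma psum_word_of_Suc:
  "psum (word_of (a, (e, i) # L)) (Suc k) = psum (word_of (a + i, L)) k"
proof -
  have "psum (word_of (a, (e, i) # L)) (Suc k) = a + psum (word_of (i, L)) k"
    unfolding psum_def sum.atMost_Suc_shift
    by (simp only: iexp_word_of_0 iexp_word_of_Suc)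
  then show ?thesis
    using psum_word_of_shift[of i L k] psum_word_of_shift[of "a + i" L k] by simp
qed

lemma ylen_word_of: "ylen (word_of (a, L)) = length L"
proof -
  have "filter (\<lambda>c. fst c = Y) (xpow k) = []" for k
    using fst_set_xpow by (fastforce simp: filter_empty_conv)
  then show ?thesis
    by (induction L arbitrary: a) (auto simp: ylen_def word_of.simps(2))
qed

lemma mindex_word_of_Nil: "mindex (word_of (a, [])) c = 0"
  using ylen_word_of[of a "[]"] unfolding mindex_def by (auto intro: Least_equality)

lemma mindex_word_of_Cons:
  "mindex (word_of (a, (e, i) # L)) c =
   (if a \<le> c then 0 else Suc (mindex (word_of (a + i, L)) c))"
proof -
  let ?w = "word_of (a, (e, i) # L)" and ?v = "word_of (a + i, L)"
  let ?P = "\<lambda>w k. k \<le> ylen w \<and> psum w k \<le> c"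
  have mindex_eq: "mindex w c = (if \<exists>k. ?P w k then LEAST k. ?P w k else ylen w)" for w
    by (simp only: mindex_def)
  have P_0: "?P ?w 0 \<longleftrightarrow> a \<le> c"
    by (simp add: psum_word_of_0)
  have P_Suc: "?P ?w (Suc k) \<longleftrightarrow> ?P ?v k" for k
    by (simp only: ylen_word_of psum_word_of_Suc length_Cons Suc_le_mono)
  show ?thesis
  proof (cases "a \<le> c")
    case True
    then show ?thesis
      using P_0 mindex_eq[of ?w] by (auto intro: Least_eq_0)
  next
    case False
    show ?thesis
    proof (cases "\<exists>k. ?P ?v k")
      case True
      then obtain k where "?P ?w (Suc k)"
        using P_Suc by blast
      then have "(LEAST k. ?P ?w k) = Suc (LEAST k. ?P ?w (Suc k))"
        using Least_Suc[of "?P ?w"] P_0 False by blast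
      also have "\<dots> = Suc (LEAST k. ?P ?v k)"
        by (simp only: P_Suc)
      finally have "(LEAST k. ?P ?w k) = Suc (LEAST k. ?P ?v k)" .
      then show ?thesis
        using True False P_Suc mindex_eq[of ?w] mindex_eq[of ?v] by auto
    next
      case no_k: False
      then have "\<not> (\<exists>k. ?P ?w k)"
        using P_0 P_Suc False by (metis not0_implies_Suc)
      then have "mindex ?w c = ylen ?w"
        unfolding mindex_eq[of ?w] by (rule if_not_P)
      moreover have "mindex ?v c = ylen ?v"
        unfolding mindex_eq[of ?v] using no_k by (rule if_not_P)
      ultimately show ?thesis
        using False by (simp add: ylen_word_of)
    qed
  qed
qed

lemma mindex_ymul_nonpos:
  assumes "irred_blocks ((e, i) # L)" "a \<le> 0"
  shows "mindex (word_of (ymul True (a, (e, i) # L))) 1 = 0"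
proof (cases "\<not> e \<and> a = 0")
  case True
  then have ymul: "ymul True (a, (e, i) # L) = (i, L)"
    by (simp add: rule_threshold_def)
  show ?thesis
  proof (cases L)
    case Nil
    then show ?thesis using ymul mindex_word_of_Nil[of i 1] by simp
  next
    case (Cons q L')
    obtain e' i' where q: "q = (e', i')" by force
    have "i \<le> 1"
      using assms(1) Cons q True by (simp add: rule_threshold_def)
    then show ?thesis
      using ymul Cons q by (simp add: mindex_word_of_Cons)
  qed
next
  case False
  then show ?thesis
    using assms(2) by (auto simp: rule_threshold_def mindex_word_of_Cons)
qed

lemma mindex_psum_ymul:
  assumes "irred_blocks L"
  shows "mindex (word_of (a, L)) 0 = mindex (word_of (ymul True (a, L))) 1 \<and>
         (\<forall>k < mindex (word_of (a, L)) 0.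
            psum (word_of (ymul True (a, L))) k - 1 = psum (word_of (a, L)) k)"
  using assms
proof (induction L arbitrary: a)
  case Nil
  show ?case
    using mindex_word_of_Nil[of a 0] by (simp add: mindex_word_of_Cons)
next
  case (Cons p L)
  obtain e i where p: "p = (e, i)" by force
  show ?case
  proof (cases "1 \<le> a")
    case True
    obtain j M where r: "ymul True (a + i, L) = (j, M)" by force
    have IH: "mindex (word_of (a + i, L)) 0 = mindex (word_of (j, M)) 1 \<and>
        (\<forall>k < mindex (word_of (a + i, L)) 0.
           psum (word_of (j, M)) k - 1 = psum (word_of (a + i, L)) k)"
      using Cons.IH[of "a + i"] Cons.prems irred_blocks_Cons r by simp
    have ymul: "ymul True (a, p # L) = (a + 1, (e, j - a - 1) # M)"
      using True r p by (simp add: rule_threshold_def bsgn_def add.commute)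
    have m: "mindex (word_of (a, p # L)) 0 = Suc (mindex (word_of (a + i, L)) 0)"
      "mindex (word_of (a + 1, (e, j - a - 1) # M)) 1 = Suc (mindex (word_of (j, M)) 1)"
      using True p by (simp_all add: mindex_word_of_Cons)
    have "psum (word_of (a + 1, (e, j - a - 1) # M)) k - 1 = psum (word_of (a, p # L)) k"
      if "k < mindex (word_of (a, p # L)) 0" for k
    proof (cases k)
      case 0
      then show ?thesis by (simp add: psum_word_of_0)
    next
      case (Suc k')
      then show ?thesis
        using that IH m(1) p by (simp add: psum_word_of_Suc)
    qed
    then show ?thesis
      using ymul m IH by simp
  next
    case False
    then have "mindex (word_of (ymul True (a, (e, i) # L))) 1 = 0"
      using Cons.prems p mindex_ymul_nonpos[of e i L a] by simp
    then show ?thesis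
      using False p by (simp add: mindex_word_of_Cons)
  qed
qed

theorem lemma4p1:
  fixes w :: word
  assumes "\<not> edge_on_T w (Y, True)"
  shows "mindex (nf w) 0 = mindex (nf (w @ [(Y, True)])) 1 \<and>
         (\<forall>k < mindex (nf w) 0.
            psum (nf (w @ [(Y, True)])) k - 1 = psum (nf w) k)"
proof -
  obtain a L where code: "code_of w = (a, L)" by force
  then have "irred_blocks L"
    using irred_code_code_of[of w] by (simp add: irred_code_def)
  moreover have "code_of (w @ [(Y, True)]) = ymul True (a, L)"
    using code by (simp add: code_of_def)
  ultimately show ?thesis
    using mindex_psum_ymul[of L a] code by (simp add: nf_eq_word_of_code)
qed

end
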